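(* Let $R$ be a ring, $\phi:M\to M'$ an epimorphism of left $R$-modules and $N$ a submodule of $M$ with $N\supseteq\ker\phi$. Then: (i) if $\beta^s_{co}(N)=\langle E_M(N)\rangle$, then $\beta^s_{co}(\phi(N))=\langle E_{M'}(\phi(N))\rangle$; (ii) if $N'$ is a submodule of $M'$ with $\beta^s_{co}(N')=\langle E_{M'}(N')\rangle$, then $\beta^s_{co}(\phi^{-1}(N'))=\langle E_M(\phi^{-1}(N'))\rangle$; (iii) if $\beta^s(N)=\langle E_M(N)\rangle$, then $\beta^s(\phi(N))=\langle E_{M'}(\phi(N))\rangle$; (iv) if $N'$ is a submodule of $M'$ with $\beta^s(N')=\langle E_{M'}(N')\rangle$, then $\beta^s(\phi^{-1}(N'))=\langle E_M(\phi^{-1}(N'))\rangle$.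
   Context: Rings are associative with identity; modules are unital left modules. For a module $X$ and submodule $K$: a submodule $P$ of $X$ is prime if $RX\not\subseteq P$ and for every ideal $A$ of $R$ and submodule $L$ with $AL\subseteq P$, $L\subseteq P$ or $AX\subseteq P$; completely prime if $RX\not\subseteq P$ and $rx\in P$ implies $x\in P$ or $rX\subseteq P$. $\beta^s(K)$ (resp. $\beta^s_{co}(K)$) is the intersection of all prime (resp. completely prime) submodules of $X$ containing $K$ ($=X$ if none), computed in the ambient module of $K$. $E_X(K)=\{rx: r\in R,x\in X, r^kx\in K\text{ for some }k\in\mathbb N\}$ and $\langle E_X(K)\rangle$ is the submodule it generates. *)

theory Defs
  imports "HOL-Algebra.Module" "HOL-Algebra.Ideal"
begin

(* Left unital module over an arbitrary (associative, unital, not necessarily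
   commutative) ring; same axioms as HOL-Algebra's module but with ring R. *)
locale lmodule = R?: ring R + M?: abelian_group M
  for R :: "('r, 'c) ring_scheme" (structure) and M :: "('r, 'a, 'd) module_scheme" (structure) +
  assumes smult_closed:
      "\<lbrakk> a \<in> carrier R; x \<in> carrier M \<rbrakk> \<Longrightarrow> a \<odot>\<^bsub>M\<^esub> x \<in> carrier M"
    and smult_l_distr:
      "\<lbrakk> a \<in> carrier R; b \<in> carrier R; x \<in> carrier M \<rbrakk> \<Longrightarrow>
      (a \<oplus> b) \<odot>\<^bsub>M\<^esub> x = a \<odot>\<^bsub>M\<^esub> x \<oplus>\<^bsub>M\<^esub> b \<odot>\<^bsub>M\<^esub> x"
    and smult_r_distr:
      "\<lbrakk> a \<in> carrier R; x \<in> carrier M; y \<in> carrier M \<rbrakk> \<Longrightarrow>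
      a \<odot>\<^bsub>M\<^esub> (x \<oplus>\<^bsub>M\<^esub> y) = a \<odot>\<^bsub>M\<^esub> x \<oplus>\<^bsub>M\<^esub> a \<odot>\<^bsub>M\<^esub> y"
    and smult_assoc1:
      "\<lbrakk> a \<in> carrier R; b \<in> carrier R; x \<in> carrier M \<rbrakk> \<Longrightarrow>
      (a \<otimes> b) \<odot>\<^bsub>M\<^esub> x = a \<odot>\<^bsub>M\<^esub> (b \<odot>\<^bsub>M\<^esub> x)"
    and smult_one:
      "x \<in> carrier M \<Longrightarrow> \<one> \<odot>\<^bsub>M\<^esub> x = x"

definition lsubmodule :: "('r,'c) ring_scheme \<Rightarrow> ('r,'a,'d) module_scheme \<Rightarrow> 'a set \<Rightarrow> bool" where
  "lsubmodule R X L \<longleftrightarrow>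
     L \<subseteq> carrier X \<and> \<zero>\<^bsub>X\<^esub> \<in> L \<and>
     (\<forall>x\<in>L. \<forall>y\<in>L. x \<oplus>\<^bsub>X\<^esub> y \<in> L) \<and>
     (\<forall>x\<in>L. \<ominus>\<^bsub>X\<^esub> x \<in> L) \<and>
     (\<forall>r\<in>carrier R. \<forall>x\<in>L. r \<odot>\<^bsub>X\<^esub> x \<in> L)"

definition gen_submodule :: "('r,'c) ring_scheme \<Rightarrow> ('r,'a,'d) module_scheme \<Rightarrow> 'a set \<Rightarrow> 'a set" where
  "gen_submodule R X S = \<Inter> {L. lsubmodule R X L \<and> S \<subseteq> L}"

definition RX_sub :: "('r,'c) ring_scheme \<Rightarrow> ('r,'a,'d) module_scheme \<Rightarrow> 'a set \<Rightarrow> bool" where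
  "RX_sub R X P \<longleftrightarrow> (\<forall>r\<in>carrier R. \<forall>x\<in>carrier X. r \<odot>\<^bsub>X\<^esub> x \<in> P)"

(* prime submodule; "AL \<subseteq> P" for the submodule P is expressed as: every a l lies in P *)
definition prime_submodule :: "('r,'c) ring_scheme \<Rightarrow> ('r,'a,'d) module_scheme \<Rightarrow> 'a set \<Rightarrow> bool" where
  "prime_submodule R X P \<longleftrightarrow>
     lsubmodule R X P \<and> \<not> RX_sub R X P \<and>
     (\<forall>A L. ideal A R \<longrightarrow> lsubmodule R X L \<longrightarrow>
        (\<forall>a\<in>A. \<forall>l\<in>L. a \<odot>\<^bsub>X\<^esub> l \<in> P) \<longrightarrow>
        (L \<subseteq> P \<or> (\<forall>a\<in>A. \<forall>x\<in>carrier X. a \<odot>\<^bsub>X\<^esub> x \<in> P)))"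

definition cprime_submodule :: "('r,'c) ring_scheme \<Rightarrow> ('r,'a,'d) module_scheme \<Rightarrow> 'a set \<Rightarrow> bool" where
  "cprime_submodule R X P \<longleftrightarrow>
     lsubmodule R X P \<and> \<not> RX_sub R X P \<and>
     (\<forall>r\<in>carrier R. \<forall>x\<in>carrier X. r \<odot>\<^bsub>X\<^esub> x \<in> P \<longrightarrow>
        (x \<in> P \<or> (\<forall>y\<in>carrier X. r \<odot>\<^bsub>X\<^esub> y \<in> P)))"

definition beta_s :: "('r,'c) ring_scheme \<Rightarrow> ('r,'a,'d) module_scheme \<Rightarrow> 'a set \<Rightarrow> 'a set" where
  "beta_s R X K =
    (if {P. prime_submodule R X P \<and> K \<subseteq> P} = {} then carrier X
     else \<Inter> {P. prime_submodule R X P \<and> K \<subseteq> P})"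

definition beta_co :: "('r,'c) ring_scheme \<Rightarrow> ('r,'a,'d) module_scheme \<Rightarrow> 'a set \<Rightarrow> 'a set" where
  "beta_co R X K =
    (if {P. cprime_submodule R X P \<and> K \<subseteq> P} = {} then carrier X
     else \<Inter> {P. cprime_submodule R X P \<and> K \<subseteq> P})"

definition E_set :: "('r,'c) ring_scheme \<Rightarrow> ('r,'a,'d) module_scheme \<Rightarrow> 'a set \<Rightarrow> 'a set" where
  "E_set R X K = {r \<odot>\<^bsub>X\<^esub> x | r x. r \<in> carrier R \<and> x \<in> carrier X \<and>
       (\<exists>k::nat. k \<ge> 1 \<and> (r [^]\<^bsub>R\<^esub> k) \<odot>\<^bsub>X\<^esub> x \<in> K)}"

definition lmod_hom :: "('r,'c) ring_scheme \<Rightarrow> ('r,'a,'d) module_scheme \<Rightarrow> ('r,'b,'e) module_scheme \<Rightarrow> ('a \<Rightarrow> 'b) \<Rightarrow> bool" where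
  "lmod_hom R M M' f \<longleftrightarrow>
     (\<forall>x\<in>carrier M. f x \<in> carrier M') \<and>
     (\<forall>x\<in>carrier M. \<forall>y\<in>carrier M. f (x \<oplus>\<^bsub>M\<^esub> y) = f x \<oplus>\<^bsub>M'\<^esub> f y) \<and>
     (\<forall>r\<in>carrier R. \<forall>x\<in>carrier M. f (r \<odot>\<^bsub>M\<^esub> x) = r \<odot>\<^bsub>M'\<^esub> f x)"

definition lmod_epi :: "('r,'c) ring_scheme \<Rightarrow> ('r,'a,'d) module_scheme \<Rightarrow> ('r,'b,'e) module_scheme \<Rightarrow> ('a \<Rightarrow> 'b) \<Rightarrow> bool" where
  "lmod_epi R M M' f \<longleftrightarrow> lmod_hom R M M' f \<and> f ` carrier M = carrier M'"

definition lmod_ker :: "('r,'a,'d) module_scheme \<Rightarrow> ('r,'b,'e) module_scheme \<Rightarrow> ('a \<Rightarrow> 'b) \<Rightarrow> 'a set" where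
  "lmod_ker M M' f = {x \<in> carrier M. f x = \<zero>\<^bsub>M'\<^esub>}"

definition lmod_preim :: "('r,'a,'d) module_scheme \<Rightarrow> ('a \<Rightarrow> 'b) \<Rightarrow> 'b set \<Rightarrow> 'a set" where
  "lmod_preim M f N' = {x \<in> carrier M. f x \<in> N'}"

end

theory Submission
  imports Defs "HOL-Algebra.AbelCoset"
begin

text \<open>
  An epimorphism \<open>f : M \<rightarrow> M'\<close> induces the correspondence \<open>Q \<mapsto> f(Q)\<close>, \<open>P \<mapsto> f\<^sup>-\<^sup>1(P)\<close>
  between the submodules of \<open>M\<close> containing \<open>ker f\<close> and all submodules of \<open>M'\<close>.
  It preserves inclusions, primeness and complete primeness, so for a submodule
  \<open>K \<supseteq> ker f\<close> it carries the family of (completely) prime submodules above \<open>K\<close> onto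
  that above \<open>f(K)\<close>, whence \<open>f\<^sup>-\<^sup>1(\<beta>(f(K))) = \<beta>(K)\<close>. Likewise \<open>f(E(K)) = E(f(K))\<close>, and
  \<open>f\<^sup>-\<^sup>1\<langle>f(S)\<rangle> = \<langle>S\<rangle>\<close> for \<open>S \<supseteq> ker f\<close>, so \<open>f\<^sup>-\<^sup>1\<langle>E(f(K))\<rangle> = \<langle>E(K)\<rangle>\<close>. As \<open>f\<^sup>-\<^sup>1\<close> is
  injective on subsets of \<open>M'\<close>, \<open>\<beta>(K) = \<langle>E(K)\<rangle>\<close> holds iff \<open>\<beta>(f(K)) = \<langle>E(f(K))\<rangle>\<close>.
  All four claims are instances of this equivalence, with \<open>K = N\<close> or \<open>K = f\<^sup>-\<^sup>1(N')\<close>.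
\<close>

lemma lsubmodule_subset: "lsubmodule R X L \<Longrightarrow> L \<subseteq> carrier X"
  by (simp add: lsubmodule_def)

lemma cprime_submodule_imp_lsubmodule: "cprime_submodule R X P \<Longrightarrow> lsubmodule R X P"
  by (simp add: cprime_submodule_def)

lemma prime_submoduleI:
  assumes "lsubmodule R X P" and "\<not> RX_sub R X P"
    and "\<And>A L. \<lbrakk>ideal A R; lsubmodule R X L; \<forall>a\<in>A. \<forall>l\<in>L. a \<odot>\<^bsub>X\<^esub> l \<in> P\<rbrakk>
           \<Longrightarrow> L \<subseteq> P \<or> (\<forall>a\<in>A. \<forall>x\<in>carrier X. a \<odot>\<^bsub>X\<^esub> x \<in> P)"
  shows "prime_submodule R X P"
  using assms unfolding prime_submodule_def by blast

lemma prime_submoduleD: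
  assumes "prime_submodule R X P"
  shows "lsubmodule R X P" and "\<not> RX_sub R X P"
    and "\<lbrakk>ideal A R; lsubmodule R X L; \<forall>a\<in>A. \<forall>l\<in>L. a \<odot>\<^bsub>X\<^esub> l \<in> P\<rbrakk>
           \<Longrightarrow> L \<subseteq> P \<or> (\<forall>a\<in>A. \<forall>x\<in>carrier X. a \<odot>\<^bsub>X\<^esub> x \<in> P)"
  using assms unfolding prime_submodule_def by blast+

lemma beta_s_subset: "beta_s R X K \<subseteq> carrier X"
  unfolding beta_s_def by (auto dest: prime_submoduleD(1) lsubmodule_subset)

lemma beta_co_subset: "beta_co R X K \<subseteq> carrier X"
  unfolding beta_co_def by (auto dest: cprime_submodule_imp_lsubmodule lsubmodule_subset)

context lmodule
begin

lemma lsubmodule_carrier: "lsubmodule R M (carrier M)"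
  by (auto simp: lsubmodule_def smult_closed)

lemma RX_sub_iff: "P \<subseteq> carrier M \<Longrightarrow> RX_sub R M P \<longleftrightarrow> carrier M \<subseteq> P"
  unfolding RX_sub_def by (metis R.one_closed smult_closed smult_one subset_iff)

lemma lsubmodule_Inter:
  assumes "\<And>L. L \<in> F \<Longrightarrow> lsubmodule R M L" and "carrier M \<in> F"
  shows "lsubmodule R M (\<Inter> F)"
  using assms unfolding lsubmodule_def by (intro conjI ballI) blast+

lemma lsubmodule_gen_submodule: "S \<subseteq> carrier M \<Longrightarrow> lsubmodule R M (gen_submodule R M S)"
  unfolding gen_submodule_def by (rule lsubmodule_Inter) (auto simp: lsubmodule_carrier)

lemma gen_submodule_subset: "S \<subseteq> carrier M \<Longrightarrow> gen_submodule R M S \<subseteq> carrier M"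
  using lsubmodule_gen_submodule lsubmodule_subset by blast

lemma gen_submodule_incl: "S \<subseteq> gen_submodule R M S"
  unfolding gen_submodule_def by auto

lemma gen_submodule_least: "lsubmodule R M L \<Longrightarrow> S \<subseteq> L \<Longrightarrow> gen_submodule R M S \<subseteq> L"
  unfolding gen_submodule_def by auto

lemma E_set_incl: "K \<subseteq> carrier M \<Longrightarrow> K \<subseteq> E_set R M K"
proof
  fix x assume "K \<subseteq> carrier M" "x \<in> K"
  then have "x = \<one> \<odot>\<^bsub>M\<^esub> x" "x \<in> carrier M" "(\<one> [^]\<^bsub>R\<^esub> (1::nat)) \<odot>\<^bsub>M\<^esub> x \<in> K"
    by (auto simp: smult_one)
  then show "x \<in> E_set R M K"
    unfolding E_set_def by blast
qed

lemma E_set_subset: "E_set R M K \<subseteq> carrier M"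
  unfolding E_set_def using smult_closed by auto

end

locale lmod_epimorphism = M: lmodule R M + M': lmodule R M' for R M M' +
  fixes f assumes epi: "lmod_epi R M M' f"
begin

sublocale abelian_group_hom M M' f
  using epi
  by (intro abelian_group_hom.intro abelian_group_hom_axioms.intro group_hom.intro
      group_hom_axioms.intro M.abelian_group_axioms M'.abelian_group_axioms
      comm_group.axioms(2) M.a_comm_group M'.a_comm_group)
     (auto simp: hom_def lmod_epi_def lmod_hom_def)

abbreviation ker where "ker \<equiv> lmod_ker M M' f"
abbreviation preim where "preim P \<equiv> lmod_preim M f P"

lemma hom_smult: "r \<in> carrier R \<Longrightarrow> x \<in> carrier M \<Longrightarrow> f (r \<odot>\<^bsub>M\<^esub> x) = r \<odot>\<^bsub>M'\<^esub> f x"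
  using epi unfolding lmod_epi_def lmod_hom_def by blast

lemma image_carrier: "f ` carrier M = carrier M'"
  using epi unfolding lmod_epi_def by blast

lemma mem_preim [simp]: "x \<in> preim P \<longleftrightarrow> x \<in> carrier M \<and> f x \<in> P"
  by (simp add: lmod_preim_def)

lemma image_preim: "P \<subseteq> carrier M' \<Longrightarrow> f ` preim P = P"
  unfolding lmod_preim_def using image_carrier by (auto simp: image_iff)

lemma preim_subset: "preim P \<subseteq> carrier M"
  by auto

lemma preim_carrier: "preim (carrier M') = carrier M"
  by auto

lemma preim_inject: "P \<subseteq> carrier M' \<Longrightarrow> P' \<subseteq> carrier M' \<Longrightarrow> preim P = preim P' \<Longrightarrow> P = P'"
  by (metis image_preim)

lemma preim_image:
  assumes Q: "lsubmodule R M Q" and ker: "ker \<subseteq> Q"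
  shows "preim (f ` Q) = Q"
proof (intro equalityI subsetI)
  fix x assume "x \<in> preim (f ` Q)"
  then obtain q where x: "x \<in> carrier M" and q: "q \<in> Q" "f x = f q" by auto
  have qc: "q \<in> carrier M" using q Q lsubmodule_subset by blast
  have "x \<ominus>\<^bsub>M\<^esub> q \<in> ker"
    using x qc q(2) by (simp add: lmod_ker_def M.minus_eq M'.r_neg)
  then have "x \<ominus>\<^bsub>M\<^esub> q \<oplus>\<^bsub>M\<^esub> q \<in> Q"
    using ker q(1) Q unfolding lsubmodule_def by blast
  then show "x \<in> Q"
    using x qc by (simp add: M.minus_eq M.a_assoc M.l_neg)
next
  show "x \<in> Q \<Longrightarrow> x \<in> preim (f ` Q)" for x
    using Q lsubmodule_subset by auto
qed

lemma lsubmodule_image: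
  assumes Q: "lsubmodule R M Q"
  shows "lsubmodule R M' (f ` Q)"
  unfolding lsubmodule_def
proof (intro conjI ballI)
  have Qc: "Q \<subseteq> carrier M" using Q lsubmodule_subset by blast
  show "f ` Q \<subseteq> carrier M'"
    using Qc by auto
  show "\<zero>\<^bsub>M'\<^esub> \<in> f ` Q"
    using Q hom_zero unfolding lsubmodule_def by (metis imageI)
  show "x \<oplus>\<^bsub>M'\<^esub> y \<in> f ` Q" if xy: "x \<in> f ` Q" "y \<in> f ` Q" for x y
  proof -
    obtain a b where "a \<in> Q" "b \<in> Q" "x = f a" "y = f b" using xy by blast
    moreover have "f (a \<oplus>\<^bsub>M\<^esub> b) \<in> f ` Q" using Q \<open>a \<in> Q\<close> \<open>b \<in> Q\<close> unfolding lsubmodule_def by blast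
    ultimately show ?thesis using Qc by (simp add: subset_iff)
  qed
  show "\<ominus>\<^bsub>M'\<^esub> x \<in> f ` Q" if x: "x \<in> f ` Q" for x
  proof -
    obtain a where "a \<in> Q" "x = f a" using x by blast
    moreover have "f (\<ominus>\<^bsub>M\<^esub> a) \<in> f ` Q" using Q \<open>a \<in> Q\<close> unfolding lsubmodule_def by blast
    ultimately show ?thesis using Qc by (simp add: subset_iff)
  qed
  show "r \<odot>\<^bsub>M'\<^esub> x \<in> f ` Q" if r: "r \<in> carrier R" and x: "x \<in> f ` Q" for r x
  proof -
    obtain a where "a \<in> Q" "x = f a" using x by blast
    moreover have "f (r \<odot>\<^bsub>M\<^esub> a) \<in> f ` Q" using Q \<open>a \<in> Q\<close> r unfolding lsubmodule_def by blast
    moreover have "f (r \<odot>\<^bsub>M\<^esub> a) = r \<odot>\<^bsub>M'\<^esub> f a" using Qc r \<open>a \<in> Q\<close> hom_smult by blast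
    ultimately show ?thesis by simp
  qed
qed

lemma lsubmodule_preim: "lsubmodule R M' P \<Longrightarrow> lsubmodule R M (preim P)"
  unfolding lsubmodule_def by (auto simp: hom_smult M.smult_closed)

lemma lsubmodule_preim_iff: "P \<subseteq> carrier M' \<Longrightarrow> lsubmodule R M (preim P) \<longleftrightarrow> lsubmodule R M' P"
  using lsubmodule_image lsubmodule_preim image_preim by metis

lemma ker_subset_preim: "lsubmodule R M' P \<Longrightarrow> ker \<subseteq> preim P"
  unfolding lsubmodule_def lmod_ker_def by auto

lemma ball_carrier': "(\<forall>y\<in>carrier M'. \<Phi> y) \<longleftrightarrow> (\<forall>x\<in>carrier M. \<Phi> (f x))"
  by (subst image_carrier[symmetric]) auto

lemma smult_mem_preim:
  "r \<in> carrier R \<Longrightarrow> x \<in> carrier M \<Longrightarrow> r \<odot>\<^bsub>M\<^esub> x \<in> preim P \<longleftrightarrow> r \<odot>\<^bsub>M'\<^esub> f x \<in> P"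
  by (simp add: hom_smult M.smult_closed)

lemma image_subset_iff_subset_preim: "L \<subseteq> carrier M \<Longrightarrow> f ` L \<subseteq> P \<longleftrightarrow> L \<subseteq> preim P"
  unfolding lmod_preim_def by blast

lemma RX_sub_preim_iff: "P \<subseteq> carrier M' \<Longrightarrow> RX_sub R M (preim P) \<longleftrightarrow> RX_sub R M' P"
  by (simp add: M.RX_sub_iff M'.RX_sub_iff subset_eq ball_carrier')

lemma smult_image_mem_iff:
  assumes "A \<subseteq> carrier R" and "L \<subseteq> carrier M"
  shows "(\<forall>a\<in>A. \<forall>l\<in>f ` L. a \<odot>\<^bsub>M'\<^esub> l \<in> P) \<longleftrightarrow> (\<forall>a\<in>A. \<forall>l\<in>L. a \<odot>\<^bsub>M\<^esub> l \<in> preim P)"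
proof -
  have "a \<odot>\<^bsub>M\<^esub> l \<in> preim P \<longleftrightarrow> a \<odot>\<^bsub>M'\<^esub> f l \<in> P" if "a \<in> A" "l \<in> L" for a l
    using assms that smult_mem_preim by blast
  then show ?thesis by (simp del: mem_preim cong: ball_cong)
qed

lemma prime_submodule_preim_iff:
  assumes P: "P \<subseteq> carrier M'"
  shows "prime_submodule R M (preim P) \<longleftrightarrow> prime_submodule R M' P"
proof
  assume prime: "prime_submodule R M (preim P)"
  show "prime_submodule R M' P"
  proof (rule prime_submoduleI)
    show "lsubmodule R M' P" "\<not> RX_sub R M' P"
      using prime_submoduleD(1,2)[OF prime] lsubmodule_preim_iff[OF P] RX_sub_preim_iff[OF P] by simp_all
    fix A L assume A: "ideal A R" and L: "lsubmodule R M' L"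
      and AL: "\<forall>a\<in>A. \<forall>l\<in>L. a \<odot>\<^bsub>M'\<^esub> l \<in> P"
    have A_sub: "A \<subseteq> carrier R" and L_sub: "L \<subseteq> carrier M'"
      using additive_subgroup.a_subset[OF ideal.axioms(1)[OF A]] lsubmodule_subset[OF L] .
    have "\<forall>a\<in>A. \<forall>l\<in>preim L. a \<odot>\<^bsub>M\<^esub> l \<in> preim P"
      using AL unfolding smult_image_mem_iff[OF A_sub preim_subset, symmetric] image_preim[OF L_sub] .
    then have "preim L \<subseteq> preim P \<or> (\<forall>a\<in>A. \<forall>x\<in>carrier M. a \<odot>\<^bsub>M\<^esub> x \<in> preim P)"
      using prime_submoduleD(3)[OF prime A lsubmodule_preim[OF L]] by blast
    then show "L \<subseteq> P \<or> (\<forall>a\<in>A. \<forall>x\<in>carrier M'. a \<odot>\<^bsub>M'\<^esub> x \<in> P)"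
      unfolding image_subset_iff_subset_preim[OF preim_subset, symmetric] image_preim[OF L_sub]
        smult_image_mem_iff[OF A_sub subset_refl, symmetric] image_carrier .
  qed
next
  assume prime: "prime_submodule R M' P"
  show "prime_submodule R M (preim P)"
  proof (rule prime_submoduleI)
    show "lsubmodule R M (preim P)" "\<not> RX_sub R M (preim P)"
      using prime_submoduleD(1,2)[OF prime] lsubmodule_preim_iff[OF P] RX_sub_preim_iff[OF P] by simp_all
    fix A L assume A: "ideal A R" and L: "lsubmodule R M L"
      and AL: "\<forall>a\<in>A. \<forall>l\<in>L. a \<odot>\<^bsub>M\<^esub> l \<in> preim P"
    have A_sub: "A \<subseteq> carrier R" and L_sub: "L \<subseteq> carrier M"
      using additive_subgroup.a_subset[OF ideal.axioms(1)[OF A]] lsubmodule_subset[OF L] .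
    have "\<forall>a\<in>A. \<forall>l\<in>f ` L. a \<odot>\<^bsub>M'\<^esub> l \<in> P"
      using AL unfolding smult_image_mem_iff[OF A_sub L_sub] .
    then have "f ` L \<subseteq> P \<or> (\<forall>a\<in>A. \<forall>y\<in>carrier M'. a \<odot>\<^bsub>M'\<^esub> y \<in> P)"
      using prime_submoduleD(3)[OF prime A lsubmodule_image[OF L]] by blast
    then show "L \<subseteq> preim P \<or> (\<forall>a\<in>A. \<forall>x\<in>carrier M. a \<odot>\<^bsub>M\<^esub> x \<in> preim P)"
      unfolding image_subset_iff_subset_preim[OF L_sub, symmetric]
        smult_image_mem_iff[OF A_sub subset_refl, symmetric] image_carrier .
  qed
qed

lemma cprime_submodule_preim_iff:
  assumes P: "P \<subseteq> carrier M'"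
  shows "cprime_submodule R M (preim P) \<longleftrightarrow> cprime_submodule R M' P"
proof -
  have cond: "(\<forall>r\<in>carrier R. \<forall>x\<in>carrier M. r \<odot>\<^bsub>M\<^esub> x \<in> preim P \<longrightarrow>
           x \<in> preim P \<or> (\<forall>y\<in>carrier M. r \<odot>\<^bsub>M\<^esub> y \<in> preim P))
    \<longleftrightarrow> (\<forall>r\<in>carrier R. \<forall>x\<in>carrier M'. r \<odot>\<^bsub>M'\<^esub> x \<in> P \<longrightarrow>
           x \<in> P \<or> (\<forall>y\<in>carrier M'. r \<odot>\<^bsub>M'\<^esub> y \<in> P))"
    by (simp del: mem_preim add: smult_mem_preim ball_carrier' cong: ball_cong) auto
  show ?thesis
    unfolding cprime_submodule_def lsubmodule_preim_iff[OF P] RX_sub_preim_iff[OF P] cond ..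
qed

lemma preim_Inter: "S \<noteq> {} \<Longrightarrow> preim (\<Inter> S) = \<Inter> (preim ` S)"
  by auto

lemma preim_Inter_supersets:
  assumes Pr_preim: "\<And>P. P \<subseteq> carrier M' \<Longrightarrow> Pr (preim P) \<longleftrightarrow> Pr' P"
    and Pr_lsubmodule: "\<And>Q. Pr Q \<Longrightarrow> lsubmodule R M Q"
    and Pr'_subset: "\<And>P. Pr' P \<Longrightarrow> P \<subseteq> carrier M'"
    and K: "K \<subseteq> carrier M" "ker \<subseteq> K"
  shows "preim (if {P. Pr' P \<and> f ` K \<subseteq> P} = {} then carrier M' else \<Inter> {P. Pr' P \<and> f ` K \<subseteq> P})
       = (if {Q. Pr Q \<and> K \<subseteq> Q} = {} then carrier M else \<Inter> {Q. Pr Q \<and> K \<subseteq> Q})"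
proof -
  have supersets: "{Q. Pr Q \<and> K \<subseteq> Q} = preim ` {P. Pr' P \<and> f ` K \<subseteq> P}"
  proof (intro equalityI subsetI)
    fix Q assume "Q \<in> {Q. Pr Q \<and> K \<subseteq> Q}"
    then have Q: "Pr Q" "K \<subseteq> Q" by auto
    have Q_preim: "preim (f ` Q) = Q"
      using preim_image Pr_lsubmodule[OF Q(1)] K(2) Q(2) by blast
    have "f ` Q \<subseteq> carrier M'"
      using lsubmodule_subset[OF Pr_lsubmodule[OF Q(1)]] by auto
    then have "Pr' (f ` Q)"
      using Pr_preim[of "f ` Q"] Q(1) unfolding Q_preim by blast
    with Q(2) Q_preim show "Q \<in> preim ` {P. Pr' P \<and> f ` K \<subseteq> P}"
      by (intro image_eqI[where x = "f ` Q"]) auto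
  next
    fix Q assume "Q \<in> preim ` {P. Pr' P \<and> f ` K \<subseteq> P}"
    then obtain P where P: "Pr' P" "f ` K \<subseteq> P" and Q: "Q = preim P" by blast
    have "Pr Q" "K \<subseteq> Q"
      using Pr_preim[OF Pr'_subset[OF P(1)]] P image_subset_iff_subset_preim[OF K(1)] Q by simp_all
    then show "Q \<in> {Q. Pr Q \<and> K \<subseteq> Q}" by simp
  qed
  show ?thesis
  proof (cases "{P. Pr' P \<and> f ` K \<subseteq> P} = {}")
    case True
    then show ?thesis unfolding supersets by (simp only: image_empty simp_thms if_True preim_carrier)
  next
    case False
    then have nonempty: "preim ` {P. Pr' P \<and> f ` K \<subseteq> P} \<noteq> {}" by blast
    show ?thesis
      unfolding supersets if_not_P[OF False] if_not_P[OF nonempty] by (rule preim_Inter[OF False])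
  qed
qed

lemma beta_s_preim:
  "K \<subseteq> carrier M \<Longrightarrow> ker \<subseteq> K \<Longrightarrow> preim (beta_s R M' (f ` K)) = beta_s R M K"
  unfolding beta_s_def
  by (rule preim_Inter_supersets[where Pr = "prime_submodule R M" and Pr' = "prime_submodule R M'"])
     (auto simp: prime_submodule_preim_iff dest!: prime_submoduleD(1) lsubmodule_subset)

lemma beta_co_preim:
  "K \<subseteq> carrier M \<Longrightarrow> ker \<subseteq> K \<Longrightarrow> preim (beta_co R M' (f ` K)) = beta_co R M K"
  unfolding beta_co_def
  by (rule preim_Inter_supersets[where Pr = "cprime_submodule R M" and Pr' = "cprime_submodule R M'"])
     (auto simp: cprime_submodule_preim_iff dest!: cprime_submodule_imp_lsubmodule lsubmodule_subset)

lemma image_E_set: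
  assumes K: "lsubmodule R M K" "ker \<subseteq> K"
  shows "f ` E_set R M K = E_set R M' (f ` K)"
proof (intro equalityI subsetI)
  fix y assume "y \<in> f ` E_set R M K"
  then obtain r x k where rx: "r \<in> carrier R" "x \<in> carrier M" "k \<ge> (1::nat)"
    "(r [^]\<^bsub>R\<^esub> k) \<odot>\<^bsub>M\<^esub> x \<in> K" and y: "y = f (r \<odot>\<^bsub>M\<^esub> x)"
    unfolding E_set_def by auto
  have "(r [^]\<^bsub>R\<^esub> k) \<odot>\<^bsub>M'\<^esub> f x \<in> f ` K"
    using rx hom_smult[of "r [^]\<^bsub>R\<^esub> k" x] by (metis M.R.nat_pow_closed imageI)
  moreover have "y = r \<odot>\<^bsub>M'\<^esub> f x"
    using rx y hom_smult by simp
  ultimately show "y \<in> E_set R M' (f ` K)"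
    unfolding E_set_def using rx hom_closed by blast
next
  fix y assume "y \<in> E_set R M' (f ` K)"
  then obtain r z k where rz: "r \<in> carrier R" "z \<in> carrier M'" "k \<ge> (1::nat)"
    "(r [^]\<^bsub>R\<^esub> k) \<odot>\<^bsub>M'\<^esub> z \<in> f ` K" and y: "y = r \<odot>\<^bsub>M'\<^esub> z"
    unfolding E_set_def by blast
  obtain x where x: "x \<in> carrier M" "z = f x"
    using rz(2) image_carrier by blast
  have "(r [^]\<^bsub>R\<^esub> k) \<odot>\<^bsub>M\<^esub> x \<in> preim (f ` K)"
    using rz x by (simp add: hom_smult M.smult_closed)
  then have "r \<odot>\<^bsub>M\<^esub> x \<in> E_set R M K"
    unfolding preim_image[OF K] E_set_def using rz x by blast
  moreover have "y = f (r \<odot>\<^bsub>M\<^esub> x)"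
    using rz x y hom_smult by simp
  ultimately show "y \<in> f ` E_set R M K" by blast
qed

lemma preim_gen_submodule_image:
  assumes S: "S \<subseteq> carrier M" "ker \<subseteq> S"
  shows "preim (gen_submodule R M' (f ` S)) = gen_submodule R M S"
proof
  let ?G = "gen_submodule R M S"
  have G: "lsubmodule R M ?G" and S_G: "S \<subseteq> ?G"
    using M.lsubmodule_gen_submodule[OF S(1)] M.gen_submodule_incl by blast+
  have "gen_submodule R M' (f ` S) \<subseteq> f ` ?G"
    using M'.gen_submodule_least[OF lsubmodule_image[OF G]] S_G by blast
  then have "preim (gen_submodule R M' (f ` S)) \<subseteq> preim (f ` ?G)"
    by auto
  also have "\<dots> = ?G"
    using preim_image G S_G S(2) by blast
  finally show "preim (gen_submodule R M' (f ` S)) \<subseteq> ?G" .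
  have "f ` S \<subseteq> carrier M'"
    using S(1) by auto
  then have "lsubmodule R M (preim (gen_submodule R M' (f ` S)))"
    using lsubmodule_preim M'.lsubmodule_gen_submodule by blast
  moreover have "S \<subseteq> preim (gen_submodule R M' (f ` S))"
    using S(1) M'.gen_submodule_incl[of "f ` S"] unfolding lmod_preim_def by blast
  ultimately show "?G \<subseteq> preim (gen_submodule R M' (f ` S))"
    using M.gen_submodule_least by blast
qed

lemma preim_gen_E_set:
  assumes K: "lsubmodule R M K" "ker \<subseteq> K"
  shows "preim (gen_submodule R M' (E_set R M' (f ` K))) = gen_submodule R M (E_set R M K)"
proof -
  have "ker \<subseteq> E_set R M K"
    using K M.E_set_incl lsubmodule_subset by blast
  then show ?thesis
    unfolding image_E_set[OF K, symmetric] by (rule preim_gen_submodule_image[OF M.E_set_subset])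
qed

lemma beta_s_eq_gen_E_set_iff:
  assumes K: "lsubmodule R M K" "ker \<subseteq> K"
  shows "beta_s R M' (f ` K) = gen_submodule R M' (E_set R M' (f ` K))
     \<longleftrightarrow> beta_s R M K = gen_submodule R M (E_set R M K)"
proof -
  have "preim (beta_s R M' (f ` K)) = beta_s R M K"
    using beta_s_preim[OF lsubmodule_subset[OF K(1)] K(2)] .
  moreover have "preim (gen_submodule R M' (E_set R M' (f ` K))) = gen_submodule R M (E_set R M K)"
    using preim_gen_E_set[OF K] .
  ultimately show ?thesis
    using preim_inject[OF beta_s_subset M'.gen_submodule_subset[OF M'.E_set_subset]] by metis
qed

lemma beta_co_eq_gen_E_set_iff:
  assumes K: "lsubmodule R M K" "ker \<subseteq> K"
  shows "beta_co R M' (f ` K) = gen_submodule R M' (E_set R M' (f ` K))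
     \<longleftrightarrow> beta_co R M K = gen_submodule R M (E_set R M K)"
proof -
  have "preim (beta_co R M' (f ` K)) = beta_co R M K"
    using beta_co_preim[OF lsubmodule_subset[OF K(1)] K(2)] .
  moreover have "preim (gen_submodule R M' (E_set R M' (f ` K))) = gen_submodule R M (E_set R M K)"
    using preim_gen_E_set[OF K] .
  ultimately show ?thesis
    using preim_inject[OF beta_co_subset M'.gen_submodule_subset[OF M'.E_set_subset]] by metis
qed

end

theorem lemma4p14:
  fixes R :: "('r, 'c) ring_scheme"
    and M :: "('r, 'a, 'd) module_scheme"
    and M' :: "('r, 'b, 'e) module_scheme"
    and \<phi> :: "'a \<Rightarrow> 'b"
    and N :: "'a set"
  assumes "lmodule R M" and "lmodule R M'"
    and "lmod_epi R M M' \<phi>"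
    and "lsubmodule R M N"
    and "lmod_ker M M' \<phi> \<subseteq> N"
  shows "(beta_co R M N = gen_submodule R M (E_set R M N) \<longrightarrow>
            beta_co R M' (\<phi> ` N) = gen_submodule R M' (E_set R M' (\<phi> ` N)))
       \<and> (\<forall>N'. lsubmodule R M' N' \<longrightarrow>
            beta_co R M' N' = gen_submodule R M' (E_set R M' N') \<longrightarrow>
            beta_co R M (lmod_preim M \<phi> N') = gen_submodule R M (E_set R M (lmod_preim M \<phi> N')))
       \<and> (beta_s R M N = gen_submodule R M (E_set R M N) \<longrightarrow>
            beta_s R M' (\<phi> ` N) = gen_submodule R M' (E_set R M' (\<phi> ` N)))
       \<and> (\<forall>N'. lsubmodule R M' N' \<longrightarrow>
            beta_s R M' N' = gen_submodule R M' (E_set R M' N') \<longrightarrow>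
            beta_s R M (lmod_preim M \<phi> N') = gen_submodule R M (E_set R M (lmod_preim M \<phi> N')))"
proof -
  interpret lmod_epimorphism R M M' \<phi>
    using assms(1-3) by (simp add: lmod_epimorphism_def lmod_epimorphism_axioms_def)
  show ?thesis
  proof (intro conjI allI impI)
    show "beta_co R M' (\<phi> ` N) = gen_submodule R M' (E_set R M' (\<phi> ` N))"
      if "beta_co R M N = gen_submodule R M (E_set R M N)"
      using that beta_co_eq_gen_E_set_iff[OF assms(4,5)] by blast
    show "beta_s R M' (\<phi> ` N) = gen_submodule R M' (E_set R M' (\<phi> ` N))"
      if "beta_s R M N = gen_submodule R M (E_set R M N)"
      using that beta_s_eq_gen_E_set_iff[OF assms(4,5)] by blast
    fix N' assume N': "lsubmodule R M' N'"
    show "beta_co R M (preim N') = gen_submodule R M (E_set R M (preim N'))"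
      if "beta_co R M' N' = gen_submodule R M' (E_set R M' N')"
      using that beta_co_eq_gen_E_set_iff[OF lsubmodule_preim[OF N'] ker_subset_preim[OF N']]
      unfolding image_preim[OF lsubmodule_subset[OF N']] by blast
    show "beta_s R M (preim N') = gen_submodule R M (E_set R M (preim N'))"
      if "beta_s R M' N' = gen_submodule R M' (E_set R M' N')"
      using that beta_s_eq_gen_E_set_iff[OF lsubmodule_preim[OF N'] ker_subset_preim[OF N']]
      unfolding image_preim[OF lsubmodule_subset[OF N']] by blast
  qed
qed

end
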